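(* The Jucys-Murphy elements $\mathcal L_1,\dots,\mathcal L_{r+s}$ of $H^R_{r,s}(q,\rho)$ pairwise commute, and for every $p\in S_{r,s}[x;y]$ the element $p(\mathcal L_1,\dots,\mathcal L_{r+s})$ lies in the center of $H^R_{r,s}(q,\rho)$.
   Context: Let $R$ be an integral domain, $q,\rho\in R$ with $q^{-1},\rho^{-1}\in R$, $q\ne q^{-1}$, $\delta=\frac{\rho-\rho^{-1}}{q-q^{-1}}\in R$. $H^R_{r,s}(q,\rho)$ is the unital $R$-algebra generated by $S_1,\dots,S_{r-1},S_{r+1},\dots,S_{r+s-1},E_{r,r+1}$ with relations: $(S_i-q)(S_i+q^{-1})=0$; $S_iS_{i+1}S_i=S_{i+1}S_iS_{i+1}$; $S_iS_j=S_jS_i$ ($|i-j|>1$); $E_{r,r+1}^2=\delta E_{r,r+1}$; $E_{r,r+1}S_j=S_jE_{r,r+1}$ ($j\ne r\pm1$); $\rho E_{r,r+1}=E_{r,r+1}S_{r-1}E_{r,r+1}=E_{r,r+1}S_{r+1}E_{r,r+1}$; $E_{r,r+1}S_{r-1}^{-1}S_{r+1}E_{r,r+1}S_{r-1}=E_{r,r+1}S_{r-1}^{-1}S_{r+1}E_{r,r+1}S_{r+1}$; $S_{r-1}E_{r,r+1}S_{r-1}^{-1}S_{r+1}E_{r,r+1}=S_{r+1}E_{r,r+1}S_{r-1}^{-1}S_{r+1}E_{r,r+1}$, with $S_i^{-1}=S_i-(q-q^{-1})$. For $j\le r<k$: $E_{j,k}=(S_{k-1}\cdots S_{r+1})(S_j^{-1}\cdots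 S_{r-1}^{-1})E_{r,r+1}(S_{r-1}^{-1}\cdots S_j^{-1})(S_{r+1}\cdots S_{k-1})$. $\mathcal L_1=0$; $\mathcal L_k=S_{k-1}^{-1}\mathcal L_{k-1}S_{k-1}^{-1}+S_{k-1}^{-1}$ ($2\le k\le r$); $\mathcal L_{r+1}=\rho(-\sum_{j=1}^rE_{j,r+1}+\delta)$; $\mathcal L_k=S_{k-1}\mathcal L_{k-1}S_{k-1}+S_{k-1}$ ($r+2\le k\le r+s$). $S_{r,s}[x;y]$: polynomials in $x_1,\dots,x_r,y_1,\dots,y_s$ (coefficients in the relevant ring) symmetric in the $x$'s and in the $y$'s, with $x_r=-y_1=t$ giving a polynomial independent of $t$; evaluate $x_i\mapsto\mathcal L_i$, $y_j\mapsto\mathcal L_{r+j}$. *)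

theory Defs
  imports "HOL-Combinatorics.Permutations"
begin

text \<open>The algebra H is presented by generators and relations.  We work with an arbitrary
unital R-algebra A (a ring with a central unital ring homomorphism iota from R) together with
elements S i and E of A satisfying the defining relations.  Since H is the universal such
algebra, the statement for H is equivalent to the statement for every such datum, with
"central" read as: commutes with every element of the subalgebra generated by the
image of R, the S i and E.\<close>

definition valid_S :: "nat \<Rightarrow> nat \<Rightarrow> nat \<Rightarrow> bool" where
  "valid_S r s i \<longleftrightarrow> 1 \<le> i \<and> i \<le> r + s - 1 \<and> i \<noteq> r"

definition is_alg_map :: "('r::comm_ring_1 \<Rightarrow> 'a::ring_1) \<Rightarrow> bool" where
  "is_alg_map \<iota> \<longleftrightarrow> \<iota> 1 = 1 \<and> (\<forall>a b. \<iota> (a + b) = \<iota> a + \<iota> b)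
     \<and> (\<forall>a b. \<iota> (a * b) = \<iota> a * \<iota> b) \<and> (\<forall>a x. \<iota> a * x = x * \<iota> a)"

definition Sinv :: "('r::comm_ring_1 \<Rightarrow> 'a::ring_1) \<Rightarrow> 'r \<Rightarrow> 'r \<Rightarrow> (nat \<Rightarrow> 'a) \<Rightarrow> nat \<Rightarrow> 'a" where
  "Sinv \<iota> q qi S i = S i - \<iota> (q - qi)"

definition WB_relations ::
  "nat \<Rightarrow> nat \<Rightarrow> ('r::comm_ring_1 \<Rightarrow> 'a::ring_1) \<Rightarrow> 'r \<Rightarrow> 'r \<Rightarrow> 'r \<Rightarrow> 'r
     \<Rightarrow> (nat \<Rightarrow> 'a) \<Rightarrow> 'a \<Rightarrow> bool" where
  "WB_relations r s \<iota> q qi rho delta S E \<longleftrightarrow>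
     (\<forall>i. valid_S r s i \<longrightarrow> (S i - \<iota> q) * (S i + \<iota> qi) = 0)
   \<and> (\<forall>i. valid_S r s i \<and> valid_S r s (i+1) \<longrightarrow> S i * S (i+1) * S i = S (i+1) * S i * S (i+1))
   \<and> (\<forall>i j. valid_S r s i \<and> valid_S r s j \<and> (i + 1 < j \<or> j + 1 < i) \<longrightarrow> S i * S j = S j * S i)
   \<and> E * E = \<iota> delta * E
   \<and> (\<forall>j. valid_S r s j \<and> j \<noteq> r - 1 \<and> j \<noteq> r + 1 \<longrightarrow> E * S j = S j * E)
   \<and> (2 \<le> r \<longrightarrow> \<iota> rho * E = E * S (r-1) * E)
   \<and> (2 \<le> s \<longrightarrow> \<iota> rho * E = E * S (r+1) * E)
   \<and> (2 \<le> r \<and> 2 \<le> s \<longrightarrow>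
        E * Sinv \<iota> q qi S (r-1) * S (r+1) * E * S (r-1)
          = E * Sinv \<iota> q qi S (r-1) * S (r+1) * E * S (r+1))
   \<and> (2 \<le> r \<and> 2 \<le> s \<longrightarrow>
        S (r-1) * E * Sinv \<iota> q qi S (r-1) * S (r+1) * E
          = S (r+1) * E * Sinv \<iota> q qi S (r-1) * S (r+1) * E)"

definition Ejk :: "nat \<Rightarrow> ('r::comm_ring_1 \<Rightarrow> 'a::ring_1) \<Rightarrow> 'r \<Rightarrow> 'r \<Rightarrow> (nat \<Rightarrow> 'a) \<Rightarrow> 'a
     \<Rightarrow> nat \<Rightarrow> nat \<Rightarrow> 'a" where
  "Ejk r \<iota> q qi S E j k =
     prod_list (map S (rev [r+1..<k])) * prod_list (map (Sinv \<iota> q qi S) [j..<r]) * E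
     * prod_list (map (Sinv \<iota> q qi S) (rev [j..<r])) * prod_list (map S [r+1..<k])"

text \<open>Jucys-Murphy elements; JM ... k is \<L>_k (the value at 0 is irrelevant).\<close>
primrec JM :: "nat \<Rightarrow> ('r::comm_ring_1 \<Rightarrow> 'a::ring_1) \<Rightarrow> 'r \<Rightarrow> 'r \<Rightarrow> 'r \<Rightarrow> 'r
     \<Rightarrow> (nat \<Rightarrow> 'a) \<Rightarrow> 'a \<Rightarrow> nat \<Rightarrow> 'a" where
  "JM r \<iota> q qi rho delta S E 0 = 0"
| "JM r \<iota> q qi rho delta S E (Suc k) =
     (if k = 0 then 0
      else if Suc k \<le> r then
        Sinv \<iota> q qi S k * JM r \<iota> q qi rho delta S E k * Sinv \<iota> q qi S k + Sinv \<iota> q qi S k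
      else if Suc k = r + 1 then
        \<iota> rho * (- (\<Sum>j=1..r. Ejk r \<iota> q qi S E j (r+1)) + \<iota> delta)
      else S k * JM r \<iota> q qi rho delta S E k * S k + S k)"

inductive_set gen_alg :: "nat \<Rightarrow> nat \<Rightarrow> ('r \<Rightarrow> 'a::ring_1) \<Rightarrow> (nat \<Rightarrow> 'a) \<Rightarrow> 'a \<Rightarrow> 'a set"
  for r s \<iota> S E where
  scal: "\<iota> c \<in> gen_alg r s \<iota> S E"
| genS: "valid_S r s i \<Longrightarrow> S i \<in> gen_alg r s \<iota> S E"
| genE: "E \<in> gen_alg r s \<iota> S E"
| add: "x \<in> gen_alg r s \<iota> S E \<Longrightarrow> y \<in> gen_alg r s \<iota> S E \<Longrightarrow> x + y \<in> gen_alg r s \<iota> S E"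
| mult: "x \<in> gen_alg r s \<iota> S E \<Longrightarrow> y \<in> gen_alg r s \<iota> S E \<Longrightarrow> x * y \<in> gen_alg r s \<iota> S E"

text \<open>Polynomials in variables 1..r+s (x_i = variable i, y_j = variable r+j), given by
a finitely supported coefficient function on exponent vectors.\<close>
definition is_poly :: "nat \<Rightarrow> ((nat \<Rightarrow> nat) \<Rightarrow> 'r::comm_ring_1) \<Rightarrow> bool" where
  "is_poly n c \<longleftrightarrow> finite {m. c m \<noteq> 0} \<and>
     (\<forall>m. c m \<noteq> 0 \<longrightarrow> (\<forall>i. i \<notin> {1..n} \<longrightarrow> m i = 0))"

text \<open>Membership in S_{r,s}[x;y]: symmetric in x_1..x_r, symmetric in y_1..y_s, and
substituting x_r = t, y_1 = -t gives a polynomial independent of t (all coefficients of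
t^k with k > 0 vanish).\<close>
definition in_Srs :: "nat \<Rightarrow> nat \<Rightarrow> ((nat \<Rightarrow> nat) \<Rightarrow> 'r::comm_ring_1) \<Rightarrow> bool" where
  "in_Srs r s c \<longleftrightarrow> is_poly (r+s) c
    \<and> (\<forall>\<sigma> m. \<sigma> permutes {1..r} \<longrightarrow> c (m \<circ> \<sigma>) = c m)
    \<and> (\<forall>\<sigma> m. \<sigma> permutes {r+1..r+s} \<longrightarrow> c (m \<circ> \<sigma>) = c m)
    \<and> (\<forall>m k. m r = 0 \<and> m (r+1) = 0 \<and> 0 < k \<longrightarrow>
          (\<Sum>a\<le>k. (-1)^(k-a) * c (m(r := a, r+1 := k-a))) = 0)"

definition poly_eval :: "nat \<Rightarrow> ('r::comm_ring_1 \<Rightarrow> 'a::ring_1) \<Rightarrow> ((nat \<Rightarrow> nat) \<Rightarrow> 'r)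
    \<Rightarrow> (nat \<Rightarrow> 'a) \<Rightarrow> 'a" where
  "poly_eval n \<iota> c L = (\<Sum>m\<in>{m. c m \<noteq> 0}. \<iota> (c m) * prod_list (map (\<lambda>i. L i ^ m i) [1..<n+1]))"

end

theory Submission
  imports Defs "HOL-Library.Disjoint_Sets"
begin

text \<open>On each side of the wall the Jucys--Murphy elements obey the Hecke recursion
  \<open>L\<^sub>k\<^sub>+\<^sub>1 = T\<^sub>k L\<^sub>k T\<^sub>k + T\<^sub>k\<close>, so the classical Hecke algebra argument shows that they commute and
  that \<open>T\<^sub>k\<close> commutes with \<open>L\<^sub>k + L\<^sub>k\<^sub>+\<^sub>1\<close>, with \<open>L\<^sub>k L\<^sub>k\<^sub>+\<^sub>1\<close> and with every other \<open>L\<^sub>j\<close>. At the wall,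
  writing \<open>L\<^sub>r\<close> as a sum of lifted transpositions shows \<open>E (L\<^sub>r + L\<^sub>r\<^sub>+\<^sub>1) = 0 = (L\<^sub>r + L\<^sub>r\<^sub>+\<^sub>1) E\<close>,
  and the walled relations make \<open>E\<close> commute with \<open>L\<^sub>r\<^sub>+\<^sub>2\<close>, hence with all \<open>L\<^sub>k\<close>, \<open>k \<noteq> r, r + 1\<close>;
  together these give the commutativity of all \<open>L\<^sub>k\<close>.

  For centrality, the monomials of a polynomial symmetric in \<open>x\<^sub>i, x\<^sub>i\<^sub>+\<^sub>1\<close> pair off under the
  transposition, and each symmetrised pair is a polynomial in \<open>L\<^sub>i + L\<^sub>i\<^sub>+\<^sub>1\<close> and \<open>L\<^sub>i L\<^sub>i\<^sub>+\<^sub>1\<close>, which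
  commute with \<open>T\<^sub>i\<close>. Next to \<open>E\<close>, the monomial \<open>x\<^sub>r\<^sup>a y\<^sub>1\<^sup>b\<close> acts as \<open>(-1)\<^sup>b x\<^sub>r\<^sup>a\<^sup>+\<^sup>b\<close>, so the
  commutator with \<open>E\<close> collects exactly the alternating coefficient sums that vanish by the
  defining cancellation property of \<open>S\<^sub>r\<^sub>,\<^sub>s[x;y]\<close>.\<close>

section \<open>Commuting elements of a ring\<close>

definition commute :: "'a::ring_1 \<Rightarrow> 'a \<Rightarrow> bool" where
  "commute x y \<longleftrightarrow> x * y = y * x"

lemma commute_sym: "commute x y \<Longrightarrow> commute y x"
  by (simp add: commute_def)

lemma commute_refl [simp]: "commute x x"
  and commute_0 [simp]: "commute x 0" "commute 0 x"
  and commute_1 [simp]: "commute x 1" "commute 1 x"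
  by (simp_all add: commute_def)

lemma commute_add: "commute x a \<Longrightarrow> commute x b \<Longrightarrow> commute x (a + b)"
  and commute_diff: "commute x a \<Longrightarrow> commute x b \<Longrightarrow> commute x (a - b)"
  and commute_uminus: "commute x a \<Longrightarrow> commute x (- a)"
  by (simp_all add: commute_def algebra_simps)

lemma commute_mult: "commute x a \<Longrightarrow> commute x b \<Longrightarrow> commute x (a * b)"
  unfolding commute_def by (metis mult.assoc)

lemma commute_power: "commute x a \<Longrightarrow> commute x (a ^ n)"
  by (induction n) (simp_all add: commute_mult)

lemma commute_sum: "(\<And>i. i \<in> A \<Longrightarrow> commute x (f i)) \<Longrightarrow> commute x (sum f A)"
  by (induction A rule: infinite_finite_induct) (simp_all add: commute_add)

lemma commute_prod_list: "(\<And>y. y \<in> set ys \<Longrightarrow> commute x y) \<Longrightarrow> commute x (prod_list ys)"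
  by (induction ys) (simp_all add: commute_mult)

lemma commute_of_nat [simp]: "commute x (of_nat n)"
  by (induction n) (simp_all add: commute_add)

lemma commute_neg_one_power [simp]: "commute x ((-1) ^ n)"
  by (intro commute_power commute_uminus) simp

lemma commute_power_power: "commute x y \<Longrightarrow> x ^ a * y ^ b = y ^ b * x ^ a"
  by (metis commute_def commute_power commute_sym)

lemma power_mult_commute: "commute x y \<Longrightarrow> (x * y) ^ k = x ^ k * y ^ k"
proof (induction k)
  case (Suc k)
  have "y * x ^ k = x ^ k * y"
    using commute_power_power[OF commute_sym[OF Suc.prems], of 1 k] by simp
  have "(x * y) ^ Suc k = x * ((y * x ^ k) * y ^ k)"
    using Suc by (simp add: mult.assoc)
  also have "\<dots> = x ^ Suc k * y ^ Suc k"
    unfolding \<open>y * x ^ k = x ^ k * y\<close> by (simp add: mult.assoc)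
  finally show ?case .
qed simp

lemma power_sum_Suc_Suc:
  assumes "commute x y"
  shows "x ^ Suc (Suc n) + y ^ Suc (Suc n) = (x + y) * (x ^ Suc n + y ^ Suc n) - (x * y) * (x ^ n + y ^ n)"
proof -
  have "y * x ^ Suc n = x * y * x ^ n"
    using commute_power_power[OF commute_sym[OF assms], of 1 "Suc n"]
      commute_power_power[OF commute_sym[OF assms], of 1 n]
    by (simp add: mult.assoc)
  then show ?thesis by (simp add: algebra_simps)
qed

text \<open>Whatever commutes with \<open>x + y\<close> and \<open>x y\<close> commutes with every symmetric polynomial in the
  commuting elements \<open>x\<close>, \<open>y\<close>; it suffices to treat the symmetrised monomials.\<close>

lemma commute_power_sum:
  assumes "commute x y" "commute Y (x + y)" "commute Y (x * y)"
  shows "commute Y (x ^ n + y ^ n)"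
proof (induction n rule: less_induct)
  case (less n)
  consider "n = 0" | "n = 1" | k where "n = Suc (Suc k)"
    by (metis One_nat_def not0_implies_Suc)
  then show ?case
  proof cases
    case 1
    have "commute Y (of_nat 2)" by (rule commute_of_nat)
    then show ?thesis using 1 by simp
  next
    case 3
    then have "commute Y (x ^ Suc k + y ^ Suc k)" "commute Y (x ^ k + y ^ k)"
      by (intro less.IH; simp)+
    then show ?thesis
      unfolding 3 power_sum_Suc_Suc[OF assms(1)] by (intro commute_diff commute_mult assms(2,3))
  qed (use assms in simp)
qed

lemma symmetric_monomial_eq:
  assumes "commute x y" "b \<le> a"
  shows "x ^ a * y ^ b + x ^ b * y ^ a = (x * y) ^ b * (x ^ (a - b) + y ^ (a - b))"
proof -
  obtain d where a: "a = b + d" using assms(2) le_Suc_ex by blast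
  have "x ^ d * y ^ b = y ^ b * x ^ d" using commute_power_power[OF assms(1)] by blast
  then show ?thesis
    unfolding a power_mult_commute[OF assms(1)] power_add by (simp add: algebra_simps)
qed

lemma commute_symmetric_monomial:
  assumes "commute x y" "commute Y (x + y)" "commute Y (x * y)"
  shows "commute Y (x ^ a * y ^ b + x ^ b * y ^ a)"
proof -
  have *: "commute Y ((x * y) ^ b' * (x ^ (a' - b') + y ^ (a' - b')))" for a' b'
    by (intro commute_mult commute_power assms commute_power_sum)
  show ?thesis
  proof (cases "b \<le> a")
    case True
    then show ?thesis using * symmetric_monomial_eq[OF assms(1)] by simp
  next
    case False
    then show ?thesis using *[of a b] symmetric_monomial_eq[OF assms(1), of a b]
      by (simp add: add.commute)
  qed
qed

section \<open>Jucys--Murphy chains in Iwahori--Hecke algebras\<close>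

lemma commute_add_conj:
  assumes w: "\<And>y. w * y = y * w" and t: "t * t = w * t + 1"
  shows "commute t (X + t * X * t)"
proof -
  have t': "t * (t * y) = w * (t * y) + y" for y
    using t by (metis mult.assoc distrib_right mult_1)
  have w': "x * (w * y) = w * (x * y)" for x y
    using w by (metis mult.assoc)
  have "t * (X + t * X * t) = t * X + w * (t * (X * t)) + X * t"
    by (simp add: algebra_simps t')
  moreover have "(X + t * X * t) * t = t * X + w * (t * (X * t)) + X * t"
    by (simp add: algebra_simps t w w')
  ultimately show ?thesis unfolding commute_def by simp
qed

lemma braid_commute_conj:
  assumes "a * Y = Y * a" and "a * b * a = b * a * b"
  shows "commute b (a * (b * Y * b) * a)"
proof -
  have braid: "b * (a * (b * y)) = a * (b * (a * y))" for y
    using assms(2) by (metis mult.assoc)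
  have aY: "a * (Y * y) = Y * (a * y)" for y
    using assms(1) by (metis mult.assoc)
  have "b * (a * (b * Y * b) * a) = a * (b * (a * (Y * (b * a))))"
    by (simp add: mult.assoc braid)
  also have "\<dots> = a * (b * (Y * (b * (a * b))))"
    using assms(2) by (simp add: aY mult.assoc)
  also have "\<dots> = a * (b * Y * b) * a * b"
    by (simp add: mult.assoc)
  finally show ?thesis unfolding commute_def by simp
qed

lemma braid_shift_central:
  fixes a b w :: "'a::ring_1"
  assumes aw: "a * w = w * a" and bw: "b * w = w * b"
    and a: "a * a = w * a + 1" and b: "b * b = w * b + 1" and braid: "a * b * a = b * a * b"
  shows "(a - w) * (b - w) * (a - w) = (b - w) * (a - w) * (b - w)"
proof -
  have aw': "a * (w * y) = w * (a * y)" for y using aw by (metis mult.assoc)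
  have bw': "b * (w * y) = w * (b * y)" for y using bw by (metis mult.assoc)
  have braid': "a * (b * a) = b * (a * b)" using braid by (simp add: mult.assoc)
  have "(a - w) * (b - w) * (a - w) = a * (b * a) - w * (a * b) - w * (b * a)
      - w * (a * a) + w * (w * a) + w * (w * b) + w * (w * a) - w * (w * w)"
    by (simp add: algebra_simps aw' bw' aw bw)
  also have "\<dots> = b * (a * b) - w * (a * b) - w * (b * a)
      - w * (b * b) + w * (w * b) + w * (w * a) + w * (w * b) - w * (w * w)"
    by (simp add: braid' a b algebra_simps)
  also have "\<dots> = (b - w) * (a - w) * (b - w)"
    by (simp add: algebra_simps aw' bw' aw bw)
  finally show ?thesis .
qed

lemma commute_jm_step_add: "commute t (X + (t * X * t + t))"
  and commute_jm_step_mult: "commute X (t * X * t + t) \<Longrightarrow> commute t (X * (t * X * t + t))"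
  if w: "\<And>x. w * x = x * w" and t: "t * t = w * t + 1"
  for t w X :: "'a::ring_1"
proof -
  define M where "M = t * X * t + t"
  have w': "\<And>x y. x * (w * y) = w * (x * y)" using w by (metis mult.assoc)
  have t': "\<And>y. t * (t * y) = w * (t * y) + y" using t by (metis mult.assoc distrib_right mult_1)
  have e1: "t * M = w * (t * (X * t)) + X * t + w * t + 1"
    unfolding M_def by (simp add: algebra_simps t' t)
  have e2: "M * t = w * (t * (X * t)) + t * X + w * t + 1"
    unfolding M_def by (simp add: algebra_simps t' t w' w)
  show "commute t (X + (t * X * t + t))" unfolding commute_def M_def[symmetric]
    using e1 e2 by (simp add: algebra_simps)
  assume "commute X (t * X * t + t)"
  then have XM: "X * M = M * X" unfolding commute_def M_def .
  have tX: "t * X = M * t - w * M - 1" using e2 unfolding M_def by (simp add: algebra_simps)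
  have tM: "t * M = X * t + w * M + 1" using e1 unfolding M_def by (simp add: algebra_simps)
  have "t * (X * M) = (M * t - w * M - 1) * M" by (simp add: tX mult.assoc[symmetric])
  also have "\<dots> = M * (t * M) - w * (M * M) - M" by (simp add: algebra_simps)
  also have "\<dots> = M * (X * t)" by (simp add: tM algebra_simps w')
  also have "\<dots> = X * M * t" by (simp add: XM mult.assoc)
  finally show "commute t (X * (t * X * t + t))"
    unfolding commute_def M_def[symmetric] by (simp add: mult.assoc)
qed

text \<open>With \<open>a = T j\<close>, \<open>b = T (j + 1)\<close> and \<open>X = L j\<close> commuting with \<open>b\<close>, the right-hand side is
  \<open>L (j + 2)\<close>: the braid relation lets \<open>a\<close> pass through it.\<close>

lemma braid_commute_jm_two_steps:
  fixes a b w X :: "'a::ring_1"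
  assumes w: "\<And>x. w * x = x * w" and b: "b * b = w * b + 1"
    and braid: "a * b * a = b * a * b" and Xb: "X * b = b * X"
  shows "commute a (b * (a * X * a + a) * b + b)"
proof -
  have b': "b * (b * y) = w * (b * y) + y" for y
    using b by (metis mult.assoc distrib_right mult_1)
  have braid': "a * (b * (a * y)) = b * (a * (b * y))" for y
    using braid by (metis mult.assoc)
  have Xb': "X * (b * y) = b * (X * y)" for y
    using Xb by (metis mult.assoc)
  have w': "x * (w * y) = w * (x * y)" for x y
    using w by (metis mult.assoc)
  have 1: "a * (b * (a * (X * (a * b)))) = b * (a * (X * (a * (b * a))))"
  proof -
    have "a * (b * (a * (X * (a * b)))) = b * (a * (b * (X * (a * b))))" by (rule braid')
    also have "\<dots> = b * (a * (X * (b * (a * b))))" by (simp only: Xb')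
    also have "\<dots> = b * (a * (X * (a * (b * a))))" using braid'[of 1] by (simp add: mult.assoc)
    finally show ?thesis .
  qed
  have "a * (b * (a * b)) = b * (a * (b * b))"
    using braid' by (metis mult_1_right)
  also have "\<dots> = w * (b * (a * b)) + b * a"
    using b by (simp add: algebra_simps w')
  finally have 2: "a * (b * (a * b)) = w * (b * (a * b)) + b * a" .
  have "(b * (a * b)) * a = b * (b * (a * b))"
    using braid by (simp add: mult.assoc)
  also have "\<dots> = w * (b * (a * b)) + a * b"
    using b' by simp
  finally have 3: "(b * (a * b)) * a = w * (b * (a * b)) + a * b" .
  show ?thesis unfolding commute_def
    using 1 2 3 by (simp add: algebra_simps)
qed

text \<open>Both halves of \<open>H\<^sub>r\<^sub>,\<^sub>s\<close> are instances: on the left with \<open>T\<^sub>i = S\<^sub>i\<^sup>-\<^sup>1\<close>, \<open>w = -(q - q\<^sup>-\<^sup>1)\<close>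
  and \<open>L 1 = 0\<close>; on the right with \<open>T\<^sub>i = S\<^sub>r\<^sub>+\<^sub>i\<close>, \<open>w = q - q\<^sup>-\<^sup>1\<close> and the chain starting at
  \<open>L\<^sub>r\<^sub>+\<^sub>1\<close>.\<close>

locale jm_chain =
  fixes T :: "nat \<Rightarrow> 'a::ring_1" and w :: 'a and n :: nat and L :: "nat \<Rightarrow> 'a"
  assumes w_central: "\<And>x. w * x = x * w"
    and quadratic: "\<And>i. 1 \<le> i \<Longrightarrow> i < n \<Longrightarrow> T i * T i = w * T i + 1"
    and braid: "\<And>i. 1 \<le> i \<Longrightarrow> i + 1 < n \<Longrightarrow> T i * T (i + 1) * T i = T (i + 1) * T i * T (i + 1)"
    and far_commute: "\<And>i j. 1 \<le> i \<Longrightarrow> j < n \<Longrightarrow> i + 1 < j \<Longrightarrow> commute (T i) (T j)"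
    and L1_commute_T: "\<And>j. 2 \<le> j \<Longrightarrow> j < n \<Longrightarrow> commute (L 1) (T j)"
    and L1_commute_L2: "2 \<le> n \<Longrightarrow> commute (L 1) (L 2)"
    and L_Suc: "\<And>k. 1 \<le> k \<Longrightarrow> k < n \<Longrightarrow> L (Suc k) = T k * L k * T k + T k"
begin

lemma commute_L_if_commute_generators:
  assumes "commute X (L 1)" "\<And>j. 1 \<le> j \<Longrightarrow> j < k \<Longrightarrow> commute X (T j)" "1 \<le> k" "k \<le> n"
  shows "commute X (L k)"
  using assms(3,4,2)
proof (induction k rule: dec_induct)
  case (step m)
  then have m: "1 \<le> m" "m < n" by simp_all
  show ?case unfolding L_Suc[OF m] using step by (intro commute_add commute_mult) simp_all
qed (use assms(1) in simp)

lemma T_commute_L_below: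
  assumes "1 \<le> k" "k < j" "j < n"
  shows "commute (T j) (L k)"
proof (rule commute_L_if_commute_generators)
  show "commute (T j) (L 1)" using L1_commute_T[of j] assms by (simp add: commute_sym)
  show "commute (T j) (T i)" if "1 \<le> i" "i < k" for i
    using far_commute[of i j] that assms by (simp add: commute_sym)
qed (use assms in auto)

lemma T_commute_L_Suc_Suc:
  assumes "1 \<le> j" "j + 2 \<le> n"
  shows "commute (T j) (L (j + 2))"
proof -
  have "commute (T j) (T (j + 1) * (T j * L j * T j + T j) * T (j + 1) + T (j + 1))"
  proof (rule braid_commute_jm_two_steps[OF w_central])
    show "T (j + 1) * T (j + 1) = w * T (j + 1) + 1" using quadratic assms by simp
    show "T j * T (j + 1) * T j = T (j + 1) * T j * T (j + 1)" using braid assms by simp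
    show "L j * T (j + 1) = T (j + 1) * L j"
      using T_commute_L_below[of j "j + 1"] assms unfolding commute_def by simp
  qed
  then show ?thesis using L_Suc[of j] L_Suc[of "j + 1"] assms by (simp add: numeral_2_eq_2)
qed

lemma T_commute_L_above:
  assumes "1 \<le> j" "j + 2 \<le> k" "k \<le> n"
  shows "commute (T j) (L k)"
  using assms(2,3)
proof (induction k rule: dec_induct)
  case base
  then show ?case using T_commute_L_Suc_Suc assms(1) by simp
next
  case (step m)
  then have m: "1 \<le> m" "m < n" by simp_all
  have "commute (T j) (T m)" using far_commute[of j m] step assms(1) by simp
  then show ?case unfolding L_Suc[OF m] using step by (intro commute_add commute_mult) simp_all
qed

lemma T_commute_L:
  assumes "1 \<le> j" "j < n" "1 \<le> k" "k \<le> n" "k \<noteq> j" "k \<noteq> j + 1"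
  shows "commute (T j) (L k)"
  using T_commute_L_below T_commute_L_above assms by (cases "k < j") simp_all

lemma L1_commute_L:
  assumes "1 \<le> l" "l \<le> n"
  shows "commute (L 1) (L l)"
proof (cases "l = 1")
  case False
  then have "2 \<le> l" using assms(1) by simp
  then show ?thesis using assms(2)
  proof (induction l rule: dec_induct)
    case base
    then show ?case by (rule L1_commute_L2)
  next
    case (step m)
    then have m: "1 \<le> m" "m < n" by simp_all
    show ?case unfolding L_Suc[OF m] using step L1_commute_T[of m]
      by (intro commute_add commute_mult) simp_all
  qed
qed simp

lemma L_commute:
  assumes "1 \<le> k" "k \<le> n" "1 \<le> l" "l \<le> n"
  shows "commute (L k) (L l)"
proof -
  have *: "commute (L l) (L k)" if "1 \<le> k" "k < l" "l \<le> n" for k l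
  proof (rule commute_L_if_commute_generators)
    show "commute (L l) (L 1)" using L1_commute_L[of l] that by (simp add: commute_sym)
    show "commute (L l) (T j)" if "1 \<le> j" "j < k" for j
      using T_commute_L_above[of j l] that \<open>k < l\<close> \<open>l \<le> n\<close> by (simp add: commute_sym)
  qed (use that in auto)
  show ?thesis
    using *[of k l] *[of l k] assms by (cases k l rule: linorder_cases) (auto simp: commute_sym)
qed

lemma T_commute_L_add:
  assumes "1 \<le> j" "j < n"
  shows "commute (T j) (L j + L (Suc j))"
  unfolding L_Suc[OF assms] by (rule commute_jm_step_add[OF w_central quadratic[OF assms]])

lemma T_commute_L_mult:
  assumes "1 \<le> j" "j < n"
  shows "commute (T j) (L j * L (Suc j))"
proof -
  have "commute (L j) (T j * L j * T j + T j)"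
    using L_commute[of j "Suc j"] assms unfolding L_Suc[OF assms] by simp
  then show ?thesis
    unfolding L_Suc[OF assms] by (rule commute_jm_step_mult[OF w_central quadratic[OF assms]])
qed

end

section \<open>Commutation with evaluations of polynomials\<close>

lemma alg_map_simps:
  assumes "is_alg_map \<iota>"
  shows "\<iota> 0 = 0" "\<iota> 1 = 1" "\<iota> (a + b) = \<iota> a + \<iota> b" "\<iota> (a * b) = \<iota> a * \<iota> b"
    "\<iota> (- a) = - \<iota> a" "\<iota> (a - b) = \<iota> a - \<iota> b"
proof -
  have add: "\<And>a b. \<iota> (a + b) = \<iota> a + \<iota> b" using assms unfolding is_alg_map_def by blast
  show zero: "\<iota> 0 = 0" using add[of 0 0] by simp
  have uminus: "\<iota> (- a) = - \<iota> a" for a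
    using add[of a "- a"] zero by (simp add: eq_neg_iff_add_eq_0 add.commute)
  then show "\<iota> (- a) = - \<iota> a" .
  show "\<iota> (a - b) = \<iota> a - \<iota> b" using add[of a "- b"] uminus[of b] by simp
  show "\<iota> 1 = 1" "\<iota> (a + b) = \<iota> a + \<iota> b" "\<iota> (a * b) = \<iota> a * \<iota> b"
    using assms unfolding is_alg_map_def by blast+
qed

lemma alg_map_central: "is_alg_map \<iota> \<Longrightarrow> \<iota> a * x = x * \<iota> a"
  by (simp add: is_alg_map_def)

lemma alg_map_sum: "is_alg_map \<iota> \<Longrightarrow> \<iota> (sum f A) = (\<Sum>x\<in>A. \<iota> (f x))"
  by (induction A rule: infinite_finite_induct) (simp_all add: alg_map_simps)

lemma alg_map_power: "is_alg_map \<iota> \<Longrightarrow> \<iota> (a ^ k) = \<iota> a ^ k"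
  by (induction k) (simp_all add: alg_map_simps)

definition monomial_on :: "(nat \<Rightarrow> 'a::ring_1) \<Rightarrow> (nat \<Rightarrow> nat) \<Rightarrow> nat list \<Rightarrow> 'a" where
  "monomial_on L m is = prod_list (map (\<lambda>i. L i ^ m i) is)"

lemma poly_eval_eq_sum_monomial_on:
  "poly_eval n \<iota> c L = (\<Sum>m | c m \<noteq> 0. \<iota> (c m) * monomial_on L m [1..<n + 1])"
  by (simp add: poly_eval_def monomial_on_def)

lemma monomial_on_cong: "(\<And>k. k \<in> set is \<Longrightarrow> m k = m' k) \<Longrightarrow> monomial_on L m is = monomial_on L m' is"
  unfolding monomial_on_def by (metis (mono_tags, lifting) map_eq_conv)

lemma commute_monomial_on:
  "(\<And>k. k \<in> set is \<Longrightarrow> commute Y (L k)) \<Longrightarrow> commute Y (monomial_on L m is)"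
  unfolding monomial_on_def by (auto intro!: commute_prod_list commute_power)

lemma monomial_on_split:
  assumes "1 \<le> p" "p + 1 \<le> n"
  shows "monomial_on L m [1..<n + 1]
    = monomial_on L m [1..<p] * (L p ^ m p * L (p + 1) ^ m (p + 1)) * monomial_on L m [p + 2..<n + 1]"
proof -
  have "[1..<n + 1] = [1..<p] @ [p..<n + 1]"
    using assms upt_add_eq_append[of 1 p "n + 1 - p"] by simp
  also have "[p..<n + 1] = p # (p + 1) # [p + 2..<n + 1]"
    using assms by (simp add: upt_conv_Cons)
  finally show ?thesis by (simp add: monomial_on_def mult.assoc)
qed

lemma poly_eval_commutator:
  assumes "is_alg_map \<iota>"
  shows "Y * poly_eval n \<iota> c L - poly_eval n \<iota> c L * Y
    = (\<Sum>m | c m \<noteq> 0. \<iota> (c m) * (Y * monomial_on L m [1..<n + 1] - monomial_on L m [1..<n + 1] * Y))"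
proof -
  have "Y * (\<iota> a * M) - \<iota> a * M * Y = \<iota> a * (Y * M - M * Y)" for a M
    using alg_map_central[OF assms, of a Y] by (simp add: right_diff_distrib mult.assoc[symmetric])
  then show ?thesis
    unfolding poly_eval_eq_sum_monomial_on sum_distrib_left sum_distrib_right sum_subtractf[symmetric]
    by simp
qed

lemma monomial_commutator:
  fixes m :: "nat \<Rightarrow> nat"
  assumes "1 \<le> p" "p + 1 \<le> n"
    and "\<And>k. 1 \<le> k \<Longrightarrow> k \<le> n \<Longrightarrow> k \<noteq> p \<Longrightarrow> k \<noteq> p + 1 \<Longrightarrow> commute Y (L k)"
  shows "Y * monomial_on L m [1..<n + 1] - monomial_on L m [1..<n + 1] * Y
    = monomial_on L m [1..<p]
      * (Y * (L p ^ m p * L (p + 1) ^ m (p + 1)) - (L p ^ m p * L (p + 1) ^ m (p + 1)) * Y)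
      * monomial_on L m [p + 2..<n + 1]"
proof -
  define A C P where "A = monomial_on L m [1..<p]" and "C = monomial_on L m [p + 2..<n + 1]"
    and "P = L p ^ m p * L (p + 1) ^ m (p + 1)"
  have "commute Y A" "commute Y C"
    unfolding A_def C_def using assms(1,2) by (auto intro!: commute_monomial_on assms(3))
  then have "Y * (A * P * C) = A * (Y * P) * C" "A * P * C * Y = A * (P * Y) * C"
    unfolding commute_def by (simp_all add: mult.assoc) (metis mult.assoc)
  then show ?thesis
    unfolding monomial_on_split[OF assms(1,2)] A_def[symmetric] C_def[symmetric] P_def[symmetric]
    by (simp add: right_diff_distrib left_diff_distrib)
qed

lemma commute_poly_eval_swap_invariant:
  assumes alg: "is_alg_map \<iota>" and fin: "finite {m. c m \<noteq> 0}"
    and swap: "\<And>m. c (m \<circ> transpose p (p + 1)) = c m"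
    and p: "1 \<le> p" "p + 1 \<le> n"
    and others: "\<And>k. 1 \<le> k \<Longrightarrow> k \<le> n \<Longrightarrow> k \<noteq> p \<Longrightarrow> k \<noteq> p + 1 \<Longrightarrow> commute Y (L k)"
    and LL: "commute (L p) (L (p + 1))"
    and Y_add: "commute Y (L p + L (p + 1))" and Y_mult: "commute Y (L p * L (p + 1))"
  shows "commute Y (poly_eval n \<iota> c L)"
proof -
  define s where "s m = m \<circ> transpose p (p + 1)" for m :: "nat \<Rightarrow> nat"
  define P where "P m = L p ^ m p * L (p + 1) ^ m (p + 1)" for m :: "nat \<Rightarrow> nat"
  define g where "g m = \<iota> (c m) * (monomial_on L m [1..<p] * (Y * P m - P m * Y)
    * monomial_on L m [p + 2..<n + 1])" for m
  have s_apply: "s m p = m (p + 1)" "s m (p + 1) = m p" "k \<noteq> p \<Longrightarrow> k \<noteq> p + 1 \<Longrightarrow> s m k = m k"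
    for m k unfolding s_def by simp_all
  have g_s: "g (s m) = \<iota> (c m) * (monomial_on L m [1..<p] * (Y * P (s m) - P (s m) * Y)
    * monomial_on L m [p + 2..<n + 1])" for m
  proof -
    have "monomial_on L (s m) [1..<p] = monomial_on L m [1..<p]"
      "monomial_on L (s m) [p + 2..<n + 1] = monomial_on L m [p + 2..<n + 1]"
      by (auto intro!: monomial_on_cong s_apply(3))
    moreover have "c (s m) = c m" unfolding s_def by (rule swap)
    ultimately show ?thesis unfolding g_def by simp
  qed
  have pair: "g (s m) + g m = 0" for m
  proof -
    have "commute Y (P m + P (s m))"
      unfolding P_def s_apply using commute_symmetric_monomial[OF LL Y_add Y_mult] by simp
    then have "Y * P (s m) - P (s m) * Y + (Y * P m - P m * Y) = 0"
      unfolding commute_def by (simp add: algebra_simps)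
    moreover have "g (s m) + g m = \<iota> (c m) * (monomial_on L m [1..<p]
      * (Y * P (s m) - P (s m) * Y + (Y * P m - P m * Y)) * monomial_on L m [p + 2..<n + 1])"
      unfolding g_s g_def[of m] by (simp only: distrib_left distrib_right)
    ultimately show ?thesis by simp
  qed
  have fixed: "g m = 0" if "s m = m" for m
  proof -
    have "P m = (L p * L (p + 1)) ^ m p"
      using s_apply(1)[of m] that unfolding P_def power_mult_commute[OF LL] by simp
    then have "commute Y (P m)" using Y_mult by (simp add: commute_power)
    then show ?thesis unfolding g_def commute_def by simp
  qed
  have "sum g {m. c m \<noteq> 0} = sum g {m \<in> {m. c m \<noteq> 0}. s m \<noteq> m}"
    by (rule sum.mono_neutral_right) (use fin fixed in auto)
  also have "\<dots> = 0"
    by (rule sum_involution_eq_0[where h = s]) (use pair swap in \<open>auto simp: s_def comp_assoc\<close>)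
  finally show ?thesis
    unfolding commute_def using poly_eval_commutator[OF alg, of Y n c L]
      monomial_commutator[OF p others] by (simp add: g_def P_def)
qed

lemma annihilator_mult_powers_left:
  assumes "commute x y" "Y * (x + y) = 0"
  shows "Y * (x ^ a * y ^ b) = (-1) ^ b * (Y * x ^ (a + b))"
proof (induction b arbitrary: a)
  case (Suc b)
  have Yy: "Y * y = - (Y * x)"
    using assms(2) by (simp add: distrib_left eq_neg_iff_add_eq_0 add.commute)
  have yx: "y * x ^ (a + b) = x ^ (a + b) * y"
    using commute_power_power[OF commute_sym[OF assms(1)], of 1 "a + b"] by simp
  have "Y * (x ^ a * y ^ Suc b) = Y * (x ^ a * y ^ b) * y" by (simp only: mult.assoc power_Suc2)
  also have "\<dots> = (-1) ^ b * (Y * y * x ^ (a + b))" by (simp add: Suc yx mult.assoc)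
  also have "\<dots> = (-1) ^ Suc b * (Y * x ^ (a + Suc b))" by (simp add: Yy mult.assoc)
  finally show ?case .
qed simp

lemma annihilator_mult_powers_right:
  assumes "commute x y" "(x + y) * Y = 0"
  shows "(x ^ a * y ^ b) * Y = (-1) ^ b * (x ^ (a + b) * Y)"
proof (induction b arbitrary: a)
  case (Suc b)
  have yY: "y * Y = - (x * Y)"
    using assms(2) by (simp add: distrib_right eq_neg_iff_add_eq_0 add.commute)
  have yx: "y ^ b * x = x * y ^ b"
    using commute_power_power[OF assms(1), of 1 b] by simp
  have "(x ^ a * y ^ Suc b) * Y = x ^ a * y ^ b * (y * Y)"
    by (simp only: mult.assoc power_Suc2)
  also have "\<dots> = - (x ^ a * (y ^ b * x) * Y)"
    by (simp add: yY mult.assoc)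
  also have "\<dots> = - (x ^ Suc a * y ^ b * Y)"
    by (simp only: yx mult.assoc[symmetric] power_Suc2[symmetric])
  also have "\<dots> = (-1) ^ Suc b * (x ^ (a + Suc b) * Y)"
    using Suc[of "Suc a"] by simp
  finally show ?case .
qed simp

text \<open>Grouping the monomials by their exponents outside \<open>p, p + 1\<close> and by their total degree
  \<open>k\<close> in these two variables, each group contributes the alternating coefficient sum of the
  cancellation condition, which vanishes for \<open>k > 0\<close>.\<close>

lemma sum_alternating_coefficients_eq_0:
  fixes c :: "(nat \<Rightarrow> nat) \<Rightarrow> 'r::comm_ring_1" and h :: "(nat \<Rightarrow> nat) \<Rightarrow> nat \<Rightarrow> 'a::ring_1"
  assumes alg: "is_alg_map \<iota>" and fin: "finite {m. c m \<noteq> 0}"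
    and cancel: "\<forall>m k. m p = 0 \<and> m (p + 1) = 0 \<and> 0 < k \<longrightarrow>
      (\<Sum>a\<le>k. (-1) ^ (k - a) * c (m(p := a, p + 1 := k - a))) = 0"
    and h0: "\<And>m. h m 0 = 0"
  shows "(\<Sum>m | c m \<noteq> 0. \<iota> (c m * (-1) ^ m (p + 1)) * h (m(p := 0, p + 1 := 0)) (m p + m (p + 1))) = 0"
proof -
  define U where "U = {m. c m \<noteq> 0}"
  define f where "f m = c m * (-1) ^ m (p + 1)" for m
  define key where "key m = (m(p := 0, p + 1 := 0), m p + m (p + 1))" for m :: "nat \<Rightarrow> nat"
  have fibre: "sum f {m \<in> U. key m = (m', k)} = 0" if "(m', k) \<in> key ` U" "0 < k" for m' k
  proof -
    have m': "m' p = 0" "m' (p + 1) = 0" using that(1) unfolding key_def by auto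
    define \<phi> where "\<phi> a = m'(p := a, p + 1 := k - a)" for a
    have "inj_on \<phi> {..k}"
      by (rule inj_onI) (metis \<phi>_def fun_upd_same fun_upd_other n_not_Suc_n Suc_eq_plus1)
    have sub: "{m \<in> U. key m = (m', k)} \<subseteq> \<phi> ` {..k}"
    proof
      fix m assume "m \<in> {m \<in> U. key m = (m', k)}"
      then have km: "m(p := 0, p + 1 := 0) = m'" "m p + m (p + 1) = k" unfolding key_def by auto
      have "m' x = m x" if "x \<noteq> p" "x \<noteq> p + 1" for x
        using fun_cong[OF km(1), of x] that by simp
      then have "\<phi> (m p) = m" unfolding \<phi>_def using km(2) by (auto simp: fun_eq_iff)
      with km(2) show "m \<in> \<phi> ` {..k}" by (metis atMost_iff image_eqI le_add1)
    qed
    have out: "f m = 0" if m: "m \<in> \<phi> ` {..k} - {m \<in> U. key m = (m', k)}" for m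
    proof -
      obtain a where a: "a \<le> k" "m = \<phi> a" using m by auto
      have "key m = (m', k)" unfolding a(2) key_def \<phi>_def using m' a(1) by (auto simp: fun_eq_iff)
      then show ?thesis using m unfolding U_def f_def by auto
    qed
    have "sum f {m \<in> U. key m = (m', k)} = sum f (\<phi> ` {..k})"
      by (rule sum.mono_neutral_left[OF _ sub]) (use out in auto)
    also have "\<dots> = (\<Sum>a\<le>k. f (\<phi> a))"
      by (rule sum.reindex[OF \<open>inj_on \<phi> {..k}\<close>, unfolded comp_def])
    also have "\<dots> = (\<Sum>a\<le>k. (-1) ^ (k - a) * c (m'(p := a, p + 1 := k - a)))"
      unfolding f_def \<phi>_def by (intro sum.cong) (auto simp: mult.commute)
    also have "\<dots> = 0" using cancel m' that(2) by auto
    finally show ?thesis .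
  qed
  have "(\<Sum>m\<in>U. \<iota> (f m) * h (fst (key m)) (snd (key m)))
      = (\<Sum>q\<in>key ` U. \<Sum>m\<in>{m \<in> U. key m = q}. \<iota> (f m) * h (fst (key m)) (snd (key m)))"
    by (rule sum.image_gen) (simp add: fin U_def)
  also have "\<dots> = (\<Sum>q\<in>key ` U. \<iota> (sum f {m \<in> U. key m = q}) * h (fst q) (snd q))"
    by (intro sum.cong refl) (auto simp: alg_map_sum[OF alg] sum_distrib_right)
  also have "\<dots> = 0"
  proof (intro sum.neutral ballI)
    fix q assume q: "q \<in> key ` U"
    obtain m' k where [simp]: "q = (m', k)" by fastforce
    show "\<iota> (sum f {m \<in> U. key m = q}) * h (fst q) (snd q) = 0"
      using fibre[of m' k] q h0 alg_map_simps(1)[OF alg] by (cases "k = 0") simp_all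
  qed
  finally show ?thesis unfolding U_def f_def key_def by simp
qed

lemma commute_poly_eval_alternating:
  assumes alg: "is_alg_map \<iota>" and fin: "finite {m. c m \<noteq> 0}"
    and cancel: "\<forall>m k. m p = 0 \<and> m (p + 1) = 0 \<and> 0 < k \<longrightarrow>
      (\<Sum>a\<le>k. (-1) ^ (k - a) * c (m(p := a, p + 1 := k - a))) = 0"
    and p: "1 \<le> p" "p + 1 \<le> n"
    and others: "\<And>k. 1 \<le> k \<Longrightarrow> k \<le> n \<Longrightarrow> k \<noteq> p \<Longrightarrow> k \<noteq> p + 1 \<Longrightarrow> commute Y (L k)"
    and LL: "commute (L p) (L (p + 1))"
    and left: "Y * (L p + L (p + 1)) = 0" and right: "(L p + L (p + 1)) * Y = 0"
  shows "commute Y (poly_eval n \<iota> c L)"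
proof -
  define h where "h m' k = monomial_on L m' [1..<p] * (Y * L p ^ k - L p ^ k * Y)
    * monomial_on L m' [p + 2..<n + 1]" for m' k
  have monomial_term: "\<iota> (c m) * (Y * monomial_on L m [1..<n + 1] - monomial_on L m [1..<n + 1] * Y)
    = \<iota> (c m * (-1) ^ m (p + 1)) * h (m(p := 0, p + 1 := 0)) (m p + m (p + 1))" for m
  proof -
    define P where "P = L p ^ m p * L (p + 1) ^ m (p + 1)"
    define A C where "A = monomial_on L m [1..<p]" and "C = monomial_on L m [p + 2..<n + 1]"
    have "A = monomial_on L (m(p := 0, p + 1 := 0)) [1..<p]"
      "C = monomial_on L (m(p := 0, p + 1 := 0)) [p + 2..<n + 1]"
      unfolding A_def C_def by (auto intro!: monomial_on_cong)
    then have h: "h (m(p := 0, p + 1 := 0)) (m p + m (p + 1))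
      = A * (Y * L p ^ (m p + m (p + 1)) - L p ^ (m p + m (p + 1)) * Y) * C"
      unfolding h_def by simp
    have "Y * P - P * Y = (-1) ^ m (p + 1) * (Y * L p ^ (m p + m (p + 1)) - L p ^ (m p + m (p + 1)) * Y)"
      unfolding P_def annihilator_mult_powers_left[OF LL left] annihilator_mult_powers_right[OF LL right]
      by (simp add: right_diff_distrib)
    moreover have "A * ((-1) ^ k * D) * C = (-1) ^ k * (A * D * C)" for k D
    proof -
      have "A * (-1) ^ k = (-1) ^ k * A"
        using commute_neg_one_power[of A k] unfolding commute_def .
      then show ?thesis by (metis mult.assoc)
    qed
    ultimately have "A * (Y * P - P * Y) * C
      = (-1) ^ m (p + 1) * (A * (Y * L p ^ (m p + m (p + 1)) - L p ^ (m p + m (p + 1)) * Y) * C)"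
      by simp
    moreover have "Y * monomial_on L m [1..<n + 1] - monomial_on L m [1..<n + 1] * Y
      = A * (Y * P - P * Y) * C"
      unfolding A_def C_def P_def by (rule monomial_commutator[OF p others])
    ultimately show ?thesis
      unfolding h by (simp add: alg_map_simps[OF alg] alg_map_power[OF alg] mult.assoc)
  qed
  have "Y * poly_eval n \<iota> c L - poly_eval n \<iota> c L * Y
    = (\<Sum>m | c m \<noteq> 0. \<iota> (c m * (-1) ^ m (p + 1)) * h (m(p := 0, p + 1 := 0)) (m p + m (p + 1)))"
    unfolding poly_eval_commutator[OF alg] monomial_term ..
  also have "\<dots> = 0"
    by (rule sum_alternating_coefficients_eq_0[OF alg fin cancel]) (simp add: h_def)
  finally show ?thesis unfolding commute_def by simp
qed

section \<open>The quantized walled Brauer algebra\<close>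

text \<open>\<open>transposition_word t d k = t\<^sub>k\<^sub>-\<^sub>1\<^sub>-\<^sub>d \<cdots> t\<^sub>k\<^sub>-\<^sub>2 t\<^sub>k\<^sub>-\<^sub>1 t\<^sub>k\<^sub>-\<^sub>2 \<cdots> t\<^sub>k\<^sub>-\<^sub>1\<^sub>-\<^sub>d\<close> is the Hecke algebra
  lift of the transposition \<open>(k - 1 - d, k)\<close>; the Jucys--Murphy element \<open>L k\<close> on the left of the
  wall is the sum of these words for \<open>d < k - 1\<close>.\<close>

primrec transposition_word :: "(nat \<Rightarrow> 'a::ring_1) \<Rightarrow> nat \<Rightarrow> nat \<Rightarrow> 'a" where
  "transposition_word t 0 k = t (k - 1)"
| "transposition_word t (Suc d) k = t (k - 2 - d) * transposition_word t d k * t (k - 2 - d)"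

locale quantized_walled_brauer =
  fixes r s :: nat and q qi rho rhoi delta :: "'r::comm_ring_1"
    and \<iota> :: "'r \<Rightarrow> 'a::ring_1" and S :: "nat \<Rightarrow> 'a" and E :: 'a
  assumes r_pos: "1 \<le> r" and s_pos: "1 \<le> s"
    and q_inverse: "q * qi = 1" and rho_inverse: "rho * rhoi = 1"
    and delta: "delta * (q - qi) = rho - rhoi"
    and alg: "is_alg_map \<iota>"
    and relations: "WB_relations r s \<iota> q qi rho delta S E"
begin

abbreviation "z \<equiv> \<iota> (q - qi)"
abbreviation "T \<equiv> Sinv \<iota> q qi S"
abbreviation "L \<equiv> JM r \<iota> q qi rho delta S E"
abbreviation "Ej j \<equiv> Ejk r \<iota> q qi S E j (Suc r)"

lemma T_eq: "T j = S j - z"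
  by (simp add: Sinv_def)

lemma central: "\<iota> a * x = x * \<iota> a"
  using alg_map_central[OF alg] .

lemma scalar_commute:
  "E * (\<iota> a * y) = \<iota> a * (E * y)" "E * \<iota> a = \<iota> a * E"
  "T j * (\<iota> a * y) = \<iota> a * (T j * y)" "T j * \<iota> a = \<iota> a * T j"
  "S j * (\<iota> a * y) = \<iota> a * (S j * y)" "S j * \<iota> a = \<iota> a * S j"
  "Ejk r \<iota> q qi S E j k * (\<iota> a * y) = \<iota> a * (Ejk r \<iota> q qi S E j k * y)"
  "Ejk r \<iota> q qi S E j k * \<iota> a = \<iota> a * Ejk r \<iota> q qi S E j k"
  using central by (metis mult.assoc)+

lemma commute_scalar [simp]: "commute x (\<iota> a)" "commute (\<iota> a) x"
  using central unfolding commute_def by simp_all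

lemma valid_S_iff: "valid_S r s i \<longleftrightarrow> 1 \<le> i \<and> i < r + s \<and> i \<noteq> r"
  using r_pos by (auto simp: valid_S_def)

lemma S_quadratic: "valid_S r s i \<Longrightarrow> S i * S i = z * S i + 1"
proof -
  assume "valid_S r s i"
  then have "(S i - \<iota> q) * (S i + \<iota> qi) = 0" using relations unfolding WB_relations_def by blast
  moreover have "\<iota> q * \<iota> qi = 1" using q_inverse alg_map_simps[OF alg] by metis
  ultimately show ?thesis
    using central[of qi "S i"] by (simp add: alg_map_simps[OF alg] algebra_simps)
qed

lemma S_braid: "valid_S r s i \<Longrightarrow> valid_S r s (i + 1) \<Longrightarrow> S i * S (i + 1) * S i = S (i + 1) * S i * S (i + 1)"
  using relations unfolding WB_relations_def by blast

lemma S_far_commute: "valid_S r s i \<Longrightarrow> valid_S r s j \<Longrightarrow> i + 1 < j \<Longrightarrow> commute (S i) (S j)"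
  using relations unfolding WB_relations_def commute_def by blast

lemma E_square: "E * E = \<iota> delta * E"
  using relations unfolding WB_relations_def by blast

lemma E_commute_S: "valid_S r s j \<Longrightarrow> j \<noteq> r - 1 \<Longrightarrow> j \<noteq> r + 1 \<Longrightarrow> commute E (S j)"
  using relations unfolding WB_relations_def commute_def by blast

lemma E_S_E_left: "2 \<le> r \<Longrightarrow> E * S (r - 1) * E = \<iota> rho * E"
  using relations unfolding WB_relations_def by metis

lemma E_S_E_right: "2 \<le> s \<Longrightarrow> E * S (Suc r) * E = \<iota> rho * E"
  using relations unfolding WB_relations_def by simp

lemma walled_relation_right: "2 \<le> r \<Longrightarrow> 2 \<le> s \<Longrightarrow>
    E * T (r - 1) * S (Suc r) * E * S (r - 1) = E * T (r - 1) * S (Suc r) * E * S (Suc r)"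
  using relations unfolding WB_relations_def by simp

lemma walled_relation_left: "2 \<le> r \<Longrightarrow> 2 \<le> s \<Longrightarrow>
    S (r - 1) * E * T (r - 1) * S (Suc r) * E = S (Suc r) * E * T (r - 1) * S (Suc r) * E"
  using relations unfolding WB_relations_def by simp

lemma commute_T_if_commute_S: "commute X (S j) \<Longrightarrow> commute X (T j)"
  unfolding T_eq by (intro commute_diff) simp_all

lemma T_commute_S_if_commute_S: "commute (S i) (S j) \<Longrightarrow> commute (T i) (S j)"
  using commute_T_if_commute_S[of "S j" i] commute_sym by blast

lemma T_quadratic: "valid_S r s i \<Longrightarrow> T i * T i = - z * T i + 1"
proof -
  assume "valid_S r s i"
  have "T i * T i = S i * S i - z * S i - S i * z + z * z"
    unfolding T_eq by (simp add: algebra_simps)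
  also have "\<dots> = - z * (S i - z) + 1"
    using S_quadratic[OF \<open>valid_S r s i\<close>] central[of "q - qi" "S i"] by (simp add: algebra_simps)
  finally show ?thesis unfolding T_eq .
qed

lemma T_braid: "valid_S r s i \<Longrightarrow> valid_S r s (i + 1) \<Longrightarrow> T i * T (i + 1) * T i = T (i + 1) * T i * T (i + 1)"
  unfolding T_eq by (rule braid_shift_central[OF central[symmetric] central[symmetric] S_quadratic S_quadratic S_braid])

lemma L_1: "L 1 = 0" "L (Suc 0) = 0"
  and L_Suc_left: "1 \<le> k \<Longrightarrow> k < r \<Longrightarrow> L (Suc k) = T k * L k * T k + T k"
  and L_Suc_r: "L (Suc r) = \<iota> rho * (- (\<Sum>j = 1..r. Ej j) + \<iota> delta)"
  and L_Suc_right: "1 \<le> k \<Longrightarrow> k < s \<Longrightarrow> L (Suc (r + k)) = S (r + k) * L (r + k) * S (r + k) + S (r + k)"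
  using r_pos by (simp_all add: JM.simps)

declare JM.simps [simp del]

sublocale left: jm_chain T "- z" r L
proof
  show "- z * x = x * - z" for x using central[of "q - qi" x] by simp
  show "T i * T i = - z * T i + 1" if "1 \<le> i" "i < r" for i
    using T_quadratic that by (simp add: valid_S_iff)
  show "T i * T (i + 1) * T i = T (i + 1) * T i * T (i + 1)" if "1 \<le> i" "i + 1 < r" for i
    using T_braid that by (simp add: valid_S_iff)
  show "commute (T i) (T j)" if "1 \<le> i" "j < r" "i + 1 < j" for i j
    using S_far_commute[of i j] that
    by (auto simp: valid_S_iff intro: commute_T_if_commute_S T_commute_S_if_commute_S)
  show "commute (L 1) (T j)" for j unfolding L_1 by simp
  show "commute (L 1) (L 2)" unfolding L_1 by simp
qed (simp add: L_Suc_left)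

lemma Ej_r: "Ej r = E"
  by (simp add: Ejk_def)

lemma Ej_conj: "1 \<le> j \<Longrightarrow> j < r \<Longrightarrow> Ej j = T j * Ej (Suc j) * T j"
  by (simp add: Ejk_def upt_conv_Cons mult.assoc)

lemma commute_Ej_if_commute_generators:
  assumes "commute X E" "\<And>i. j \<le> i \<Longrightarrow> i < r \<Longrightarrow> commute X (T i)" "1 \<le> j" "j \<le> r"
  shows "commute X (Ej j)"
  using assms(4,2,3)
proof (induction j rule: inc_induct)
  case (step i)
  then have i: "1 \<le> i" "i < r" by simp_all
  show ?case unfolding Ej_conj[OF i] using step by (intro commute_mult) simp_all
qed (simp add: Ej_r assms(1))

lemma E_commute_T: "1 \<le> j \<Longrightarrow> j + 2 \<le> r \<Longrightarrow> commute E (T j)"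
  by (rule commute_T_if_commute_S, rule E_commute_S) (auto simp: valid_S_iff)

lemma T_commute_Ej_above: "1 \<le> i \<Longrightarrow> i + 2 \<le> j \<Longrightarrow> j \<le> r \<Longrightarrow> commute (T i) (Ej j)"
  using commute_sym[OF E_commute_T] left.far_commute
  by (intro commute_Ej_if_commute_generators) auto

lemma T_commute_Ej_below:
  assumes "1 \<le> j" "j < i" "i < r"
  shows "commute (T i) (Ej j)"
proof -
  have "j \<le> i - 1" using assms by simp
  then show ?thesis using assms(1)
  proof (induction j rule: inc_induct)
    case base
    have i: "1 \<le> i - 1" "Suc (i - 1) = i" "i < r" using base assms by simp_all
    have "Ej (i - 1) = T (i - 1) * (T i * Ej (Suc i) * T i) * T (i - 1)"
      using Ej_conj[of "i - 1"] Ej_conj[of i] i by simp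
    moreover have "commute (T (i - 1)) (Ej (Suc i))"
      using T_commute_Ej_above[of "i - 1" "Suc i"] i by simp
    moreover have "T (i - 1) * T i * T (i - 1) = T i * T (i - 1) * T i"
      using left.braid[of "i - 1"] i by simp
    ultimately show ?case using braid_commute_conj[of "T (i - 1)" "Ej (Suc i)" "T i"]
      by (simp add: commute_def)
  next
    case (step j)
    have "commute (T j) (T i)" using left.far_commute[of j i] step assms(3) by simp
    then have "commute (T i) (T j)" by (rule commute_sym)
    then show ?case using Ej_conj[of j] step assms by (auto intro!: commute_mult)
  qed
qed

lemma T_commute_Ej_add: "1 \<le> i \<Longrightarrow> i < r \<Longrightarrow> commute (T i) (Ej i + Ej (Suc i))"
  using commute_add_conj[of "- z" "T i" "Ej (Suc i)"] left.w_central left.quadratic Ej_conj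
  by (simp add: add.commute)

lemma T_commute_sum_Ej:
  assumes "1 \<le> i" "i < r"
  shows "commute (T i) (\<Sum>j = 1..r. Ej j)"
proof -
  have "(\<Sum>j = 1..r. Ej j) = (\<Sum>j \<in> {1..r} - {i, Suc i}. Ej j) + (\<Sum>j \<in> {i, Suc i}. Ej j)"
    by (rule sum.subset_diff) (use assms in auto)
  moreover have "commute (T i) (\<Sum>j \<in> {1..r} - {i, Suc i}. Ej j)"
  proof (rule commute_sum)
    fix j assume "j \<in> {1..r} - {i, Suc i}"
    then have j: "1 \<le> j" "j \<le> r" "j \<noteq> i" "j \<noteq> Suc i" by auto
    show "commute (T i) (Ej j)"
      using T_commute_Ej_below[of j i] T_commute_Ej_above[of i j] j assms by (cases "j < i") auto
  qed
  ultimately show ?thesis using T_commute_Ej_add[OF assms] by (simp add: commute_add)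
qed

lemma T_commute_L_Suc_r: "1 \<le> i \<Longrightarrow> i < r \<Longrightarrow> commute (T i) (L (Suc r))"
  unfolding L_Suc_r by (intro commute_mult commute_add commute_uminus T_commute_sum_Ej) simp_all

lemma T_conj_transposition_word:
  "1 \<le> k \<Longrightarrow> k < r \<Longrightarrow> d + 2 \<le> k \<Longrightarrow>
    T k * transposition_word T d k * T k = transposition_word T (Suc d) (Suc k)"
proof (induction d)
  case 0
  then show ?case using left.braid[of "k - 1"] by simp
next
  case (Suc d)
  have commute: "T k * T (k - 2 - d) = T (k - 2 - d) * T k"
    using left.far_commute[of "k - 2 - d" k] Suc.prems unfolding commute_def by simp
  have "T k * transposition_word T (Suc d) k * T k
      = (T k * T (k - 2 - d)) * transposition_word T d k * (T (k - 2 - d) * T k)"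
    by (simp add: mult.assoc)
  also have "\<dots> = T (k - 2 - d) * (T k * transposition_word T d k * T k) * T (k - 2 - d)"
    by (simp only: commute mult.assoc)
  also have "\<dots> = transposition_word T (Suc (Suc d)) (Suc k)"
    using Suc by (simp add: Suc_diff_Suc numeral_2_eq_2)
  finally show ?case .
qed

lemma L_eq_sum_transposition_word: "1 \<le> k \<Longrightarrow> k \<le> r \<Longrightarrow> L k = (\<Sum>d < k - 1. transposition_word T d k)"
proof (induction k rule: dec_induct)
  case base
  show ?case unfolding L_1 by simp
next
  case (step m)
  then have m: "1 \<le> m" "m < r" by simp_all
  then have "L (Suc m) = (\<Sum>d < m - 1. T m * transposition_word T d m * T m) + T m"
    using step by (simp add: L_Suc_left sum_distrib_left sum_distrib_right)
  also have "\<dots> = (\<Sum>d < m - 1. transposition_word T (Suc d) (Suc m)) + transposition_word T 0 (Suc m)"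
    using T_conj_transposition_word m by simp
  also have "\<dots> = (\<Sum>d < Suc (m - 1). transposition_word T d (Suc m))"
    by (simp only: sum.lessThan_Suc_shift add.commute)
  finally show ?case using m by simp
qed

lemma E_T_E: "2 \<le> r \<Longrightarrow> E * T (r - 1) * E = \<iota> rhoi * E"
proof -
  assume r: "2 \<le> r"
  have delta_scalar: "\<iota> delta * z = \<iota> rho - \<iota> rhoi"
    using delta alg_map_simps[OF alg] by metis
  have "E * T (r - 1) * E = E * S (r - 1) * E - z * (E * E)"
    unfolding T_eq by (simp add: algebra_simps scalar_commute)
  also have "\<dots> = \<iota> rho * E - \<iota> delta * z * E"
    using E_S_E_left[OF r] E_square central[of delta z] by (simp add: mult.assoc)
  also have "\<dots> = \<iota> rhoi * E"
    unfolding delta_scalar by (simp add: algebra_simps)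
  finally show ?thesis .
qed

lemma E_mult_transposition_word:
  "2 \<le> r \<Longrightarrow> d + 2 \<le> r \<Longrightarrow>
    E * transposition_word T d r = \<iota> rho * (E * Ej (r - 1 - d))
    \<and> transposition_word T d r * E = \<iota> rho * (Ej (r - 1 - d) * E)"
proof (induction d)
  case 0
  have Ej: "Ej (r - 1) = T (r - 1) * E * T (r - 1)" using Ej_conj[of "r - 1"] Ej_r 0 by simp
  have rho: "\<iota> rho * \<iota> rhoi = 1" using rho_inverse alg_map_simps[OF alg] by metis
  have "E * Ej (r - 1) = \<iota> rhoi * (E * T (r - 1))"
    unfolding Ej using E_T_E[OF 0(1)] by (simp add: mult.assoc[symmetric])
  moreover have "Ej (r - 1) * E = \<iota> rhoi * (T (r - 1) * E)"
    unfolding Ej using E_T_E[OF 0(1)] by (simp add: mult.assoc scalar_commute)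
  ultimately show ?case using rho by (simp add: mult.assoc[symmetric])
next
  case (Suc d)
  define j where "j = r - 2 - d"
  have j: "1 \<le> j" "j < r" "j + 2 \<le> r" "Suc j = r - 1 - d" "r - 1 - Suc d = j"
    using Suc.prems j_def by auto
  have Ej: "Ej j = T j * Ej (r - 1 - d) * T j" using Ej_conj[OF j(1,2)] j(4) by simp
  have word: "transposition_word T (Suc d) r = T j * transposition_word T d r * T j"
    by (simp add: j_def)
  have ET: "E * T j = T j * E" "E * (T j * y) = T j * (E * y)" for y
    using E_commute_T[OF j(1,3)] unfolding commute_def by (simp_all add: mult.assoc[symmetric])
  have IH: "E * transposition_word T d r = \<iota> rho * (E * Ej (r - 1 - d))"
    "transposition_word T d r * E = \<iota> rho * (Ej (r - 1 - d) * E)"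
    using Suc by auto
  have "E * transposition_word T (Suc d) r = T j * (E * transposition_word T d r) * T j"
    unfolding word by (simp add: mult.assoc ET)
  also have "\<dots> = \<iota> rho * (E * Ej j)"
    unfolding IH Ej by (simp add: mult.assoc ET scalar_commute)
  finally have 1: "E * transposition_word T (Suc d) r = \<iota> rho * (E * Ej (r - 1 - Suc d))"
    using j by simp
  have "transposition_word T (Suc d) r * E = T j * (transposition_word T d r * E) * T j"
    unfolding word by (simp add: mult.assoc ET)
  also have "\<dots> = \<iota> rho * (Ej j * E)"
    unfolding IH Ej by (simp add: mult.assoc ET scalar_commute)
  finally have 2: "transposition_word T (Suc d) r * E = \<iota> rho * (Ej (r - 1 - Suc d) * E)"
    using j by simp
  show ?case using 1 2 by simp
qed

lemma E_mult_L_r: "E * L r = \<iota> rho * (\<Sum>j \<in> {1..<r}. E * Ej j)"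
  and L_r_mult_E: "L r * E = \<iota> rho * (\<Sum>j \<in> {1..<r}. Ej j * E)"
proof -
  have reindex: "(\<Sum>d < r - 1. f (r - 1 - d)) = (\<Sum>j \<in> {1..<r}. f j)" for f :: "nat \<Rightarrow> 'a"
    by (rule sum.reindex_bij_witness[where i = "\<lambda>j. r - 1 - j" and j = "\<lambda>d. r - 1 - d"]) auto
  have L: "L r = (\<Sum>d < r - 1. transposition_word T d r)"
    using L_eq_sum_transposition_word r_pos by simp
  have "E * L r = (\<Sum>d < r - 1. \<iota> rho * (E * Ej (r - 1 - d)))"
    unfolding L sum_distrib_left by (rule sum.cong) (use E_mult_transposition_word in auto)
  then show "E * L r = \<iota> rho * (\<Sum>j \<in> {1..<r}. E * Ej j)"
    unfolding sum_distrib_left reindex[of "\<lambda>j. \<iota> rho * (E * Ej j)"] .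
  have "L r * E = (\<Sum>d < r - 1. \<iota> rho * (Ej (r - 1 - d) * E))"
    unfolding L sum_distrib_right by (rule sum.cong) (use E_mult_transposition_word in auto)
  then show "L r * E = \<iota> rho * (\<Sum>j \<in> {1..<r}. Ej j * E)"
    unfolding sum_distrib_left reindex[of "\<lambda>j. \<iota> rho * (Ej j * E)"] .
qed

lemma sum_Ej_split: "(\<Sum>j = 1..r. Ej j) = (\<Sum>j \<in> {1..<r}. Ej j) + E"
proof -
  have "{1..r} = insert r {1..<r}" using r_pos by auto
  then show ?thesis using Ej_r by (simp add: add.commute)
qed

lemma E_mult_L_r_add: "E * (L r + L (Suc r)) = 0"
  and L_r_add_mult_E: "(L r + L (Suc r)) * E = 0"
proof -
  define G where "G = (\<Sum>j \<in> {1..<r}. Ej j)"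
  have "E * L (Suc r) = \<iota> rho * (- (E * G) - E * E + \<iota> delta * E)"
    unfolding L_Suc_r sum_Ej_split G_def[symmetric] by (simp add: algebra_simps scalar_commute)
  also have "\<dots> = - (\<iota> rho * (\<Sum>j \<in> {1..<r}. E * Ej j))"
    unfolding E_square G_def sum_distrib_left by (simp add: algebra_simps sum_distrib_left)
  finally show "E * (L r + L (Suc r)) = 0"
    using E_mult_L_r by (simp add: distrib_left)
  have "L (Suc r) * E = \<iota> rho * (- (G * E) - E * E + \<iota> delta * E)"
    unfolding L_Suc_r sum_Ej_split G_def[symmetric] by (simp add: algebra_simps scalar_commute)
  also have "\<dots> = - (\<iota> rho * (\<Sum>j \<in> {1..<r}. Ej j * E))"
    unfolding E_square G_def sum_distrib_right by (simp add: algebra_simps sum_distrib_left)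
  finally show "(L r + L (Suc r)) * E = 0"
    using L_r_mult_E by (simp add: distrib_right)
qed

lemma T_commute_S_right: "1 \<le> j \<Longrightarrow> j < r \<Longrightarrow> r < k \<Longrightarrow> k < r + s \<Longrightarrow> commute (T j) (S k)"
  by (rule T_commute_S_if_commute_S, rule S_far_commute) (auto simp: valid_S_iff)

text \<open>Where the two walled relations enter: they let \<open>E\<close> commute with
  \<open>S\<^sub>r\<^sub>+\<^sub>1 E\<^sub>r\<^sub>-\<^sub>1\<^sub>,\<^sub>r\<^sub>+\<^sub>1 S\<^sub>r\<^sub>+\<^sub>1 = S\<^sub>r\<^sub>+\<^sub>1 T\<^sub>r\<^sub>-\<^sub>1 E T\<^sub>r\<^sub>-\<^sub>1 S\<^sub>r\<^sub>+\<^sub>1\<close>; both products equal \<open>E T\<^sub>r\<^sub>-\<^sub>1 S\<^sub>r\<^sub>+\<^sub>1 E\<close>.\<close>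

lemma E_commute_conj_Ej_penultimate:
  assumes r: "2 \<le> r" and s: "2 \<le> s"
  shows "commute E (S (Suc r) * Ej (r - 1) * S (Suc r))"
proof -
  define t u K where "t = T (r - 1)" and "u = S (Suc r)" and "K = E * t * u * E"
  have tu: "t * u = u * t"
    using T_commute_S_right[of "r - 1" "Suc r"] r s unfolding t_def u_def commute_def by simp
  have uu: "u * u = z * u + 1"
    using S_quadratic[of "Suc r"] s unfolding u_def by (simp add: valid_S_iff)
  have Ej: "Ej (r - 1) = t * E * t"
    unfolding t_def using Ej_conj[of "r - 1"] Ej_r r by simp
  have S: "S (r - 1) = t + z"
    unfolding t_def T_eq by simp
  have Kt: "K * t = K * u - z * K"
    using walled_relation_right[OF r s] central[of "q - qi" K, symmetric]
    unfolding K_def[symmetric] u_def[symmetric] t_def[symmetric] S[unfolded t_def]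
    by (simp add: algebra_simps K_def)
  have tK: "t * K = u * K - z * K"
    using walled_relation_left[OF r s]
    unfolding K_def[symmetric] u_def[symmetric] t_def[symmetric] S[unfolded t_def]
    by (simp add: algebra_simps K_def mult.assoc)
  have K_z: "K * (z * y) = z * (K * y)" "u * (z * y) = z * (u * y)" for y
    using central[of "q - qi"] by (metis mult.assoc)+
  have "E * (u * Ej (r - 1) * u) = K * t * u"
    unfolding Ej K_def by (simp add: mult.assoc tu)
  also have "\<dots> = K * (u * u) - z * (K * u)"
    unfolding Kt by (simp add: algebra_simps)
  also have "\<dots> = K"
    unfolding uu by (simp add: algebra_simps K_z)
  finally have 1: "E * (u * Ej (r - 1) * u) = K" .
  have "u * Ej (r - 1) * u * E = u * (t * K)"
    unfolding Ej K_def by (simp add: mult.assoc tu)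
  also have "\<dots> = (u * u) * K - z * (u * K)"
    unfolding tK by (simp add: algebra_simps K_z)
  also have "\<dots> = K"
    unfolding uu by (simp add: algebra_simps)
  finally have 2: "u * Ej (r - 1) * u * E = K" .
  show ?thesis using 1 2 unfolding commute_def u_def by simp
qed

lemma E_commute_conj_Ej:
  assumes "1 \<le> j" "j < r" and s: "2 \<le> s"
  shows "commute E (S (Suc r) * Ej j * S (Suc r))"
proof -
  have "j \<le> r - 1" using assms by simp
  then show ?thesis using assms(1)
  proof (induction j rule: inc_induct)
    case base
    then show ?case using E_commute_conj_Ej_penultimate s by simp
  next
    case (step j)
    then have j: "1 \<le> j" "j < r" "j + 2 \<le> r" by simp_all
    have "commute (T j) (S (Suc r))" using T_commute_S_right[of j "Suc r"] j s by simp
    then have "S (Suc r) * Ej j * S (Suc r) = T j * (S (Suc r) * Ej (Suc j) * S (Suc r)) * T j"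
      unfolding Ej_conj[OF j(1,2)] commute_def by (simp add: mult.assoc) (metis mult.assoc)
    then show ?case using step E_commute_T[OF j(1,3)] by (simp add: commute_mult)
  qed
qed

lemma E_commute_conj_rho_delta_minus_E:
  assumes s: "2 \<le> s"
  shows "commute E (S (Suc r) * (\<iota> rho * (\<iota> delta - E)) * S (Suc r) + S (Suc r))"
proof -
  let ?u = "S (Suc r)" and ?a = "\<iota> rho" and ?d = "\<iota> delta"
  have uu: "?u * ?u = z * ?u + 1"
    using S_quadratic[of "Suc r"] s by (simp add: valid_S_iff)
  have EuE: "E * (?u * (E * y)) = ?a * (E * y)" "?u * (E * (?u * E)) = ?a * (?u * E)" for y
    using E_S_E_right[OF s] by (simp_all add: mult.assoc[symmetric]) (simp add: mult.assoc scalar_commute)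
  have adz: "?a * (?d * (z * y)) = ?a * (?a * y) - y" for y
  proof -
    have dz: "?d * z = ?a - \<iota> rhoi" and "?a * \<iota> rhoi = 1"
      using delta rho_inverse alg_map_simps[OF alg] by metis+
    then have "?a * (?d * z) = ?a * ?a - 1"
      unfolding dz by (simp add: right_diff_distrib)
    then have "?a * (?d * z) * y = (?a * ?a - 1) * y" by simp
    then show ?thesis by (simp add: algebra_simps)
  qed
  have X: "?u * (?a * (?d - E)) * ?u + ?u = ?a * (?d * (?u * ?u)) - ?a * (?u * (E * ?u)) + ?u"
    by (simp add: algebra_simps scalar_commute)
  have "E * (?a * (?d * (?u * ?u)) - ?a * (?u * (E * ?u)) + ?u)
      = ?a * (?d * (z * (E * ?u))) + ?a * (?d * E) - ?a * (?a * (E * ?u)) + E * ?u"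
    unfolding uu by (simp add: algebra_simps scalar_commute EuE)
  also have "\<dots> = ?a * (?d * E)"
    unfolding adz by (simp add: algebra_simps)
  finally have 1: "E * (?a * (?d * (?u * ?u)) - ?a * (?u * (E * ?u)) + ?u) = ?a * (?d * E)" .
  have "(?a * (?d * (?u * ?u)) - ?a * (?u * (E * ?u)) + ?u) * E
      = ?a * (?d * (z * (?u * E))) + ?a * (?d * E) - ?a * (?a * (?u * E)) + ?u * E"
    unfolding uu by (simp add: algebra_simps scalar_commute EuE)
  also have "\<dots> = ?a * (?d * E)"
    unfolding adz by (simp add: algebra_simps)
  finally have 2: "(?a * (?d * (?u * ?u)) - ?a * (?u * (E * ?u)) + ?u) * E = ?a * (?d * E)" .
  show ?thesis unfolding commute_def X 1 2 ..
qed

lemma commute_L_Suc_r_if_commute_generators: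
  assumes "commute X E" "\<And>i. 1 \<le> i \<Longrightarrow> i < r \<Longrightarrow> commute X (T i)"
  shows "commute X (L (Suc r))"
proof -
  have "commute X (\<Sum>j = 1..r. Ej j)"
    using commute_Ej_if_commute_generators[OF assms(1)] assms(2) by (intro commute_sum) auto
  then show ?thesis unfolding L_Suc_r by (intro commute_mult commute_add commute_uminus) simp_all
qed

lemma E_commute_L_Suc_Suc_r:
  assumes s: "2 \<le> s"
  shows "commute E (L (Suc (Suc r)))"
proof -
  let ?u = "S (Suc r)"
  define G where "G = (\<Sum>j \<in> {1..<r}. Ej j)"
  have L1: "L (Suc r) = \<iota> rho * (\<iota> delta - E) - \<iota> rho * G"
    unfolding L_Suc_r sum_Ej_split G_def by (simp add: algebra_simps)
  have "L (Suc (Suc r)) = ?u * L (Suc r) * ?u + ?u"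
    using L_Suc_right[of 1] s by simp
  also have "\<dots> = (?u * (\<iota> rho * (\<iota> delta - E)) * ?u + ?u) - \<iota> rho * (?u * G * ?u)"
    unfolding L1 by (simp add: algebra_simps scalar_commute)
  finally have L: "L (Suc (Suc r)) = (?u * (\<iota> rho * (\<iota> delta - E)) * ?u + ?u) - \<iota> rho * (?u * G * ?u)" .
  have "commute E (?u * G * ?u)"
    unfolding G_def sum_distrib_left sum_distrib_right
    using E_commute_conj_Ej s by (intro commute_sum) auto
  then show ?thesis
    unfolding L by (rule commute_diff[OF E_commute_conj_rho_delta_minus_E[OF s] commute_mult[OF commute_scalar(1)]])
qed

lemma E_commute_L_above: "Suc (Suc r) \<le> k \<Longrightarrow> k \<le> r + s \<Longrightarrow> commute E (L k)"
proof (induction k rule: dec_induct)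
  case base
  then show ?case using E_commute_L_Suc_Suc_r by simp
next
  case (step k)
  then have "commute E (S k)" by (intro E_commute_S) (auto simp: valid_S_iff)
  then show ?case using L_Suc_right[of "k - r"] step by (auto intro!: commute_add commute_mult)
qed

lemma E_commute_L_below: "1 \<le> k \<Longrightarrow> k < r \<Longrightarrow> commute E (L k)"
  by (rule left.commute_L_if_commute_generators) (auto simp: L_1 intro!: E_commute_T)

lemma L_Suc_r_commute_L_Suc_Suc_r:
  assumes s: "2 \<le> s"
  shows "commute (L (Suc r)) (L (Suc (Suc r)))"
proof -
  have "commute (L (Suc (Suc r))) (L (Suc r))"
  proof (rule commute_L_Suc_r_if_commute_generators)
    show "commute (L (Suc (Suc r))) E" using E_commute_L_Suc_Suc_r[OF s] by (rule commute_sym)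
    show "commute (L (Suc (Suc r))) (T i)" if "1 \<le> i" "i < r" for i
    proof (rule commute_sym)
      show "commute (T i) (L (Suc (Suc r)))"
        using L_Suc_right[of 1] s T_commute_S_right[OF that, of "Suc r"] T_commute_L_Suc_r[OF that]
        by (auto intro!: commute_add commute_mult)
    qed
  qed
  then show ?thesis by (rule commute_sym)
qed

lemma L_Suc_r_commute_S_right:
  assumes "2 \<le> j" "j < s"
  shows "commute (L (Suc r)) (S (r + j))"
proof (rule commute_sym, rule commute_L_Suc_r_if_commute_generators)
  show "commute (S (r + j)) E"
    using assms by (intro commute_sym[OF E_commute_S]) (auto simp: valid_S_iff)
  show "commute (S (r + j)) (T i)" if "1 \<le> i" "i < r" for i
    using that assms by (intro commute_sym[OF T_commute_S_right]) auto
qed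

sublocale right: jm_chain "\<lambda>i. S (r + i)" z s "\<lambda>i. L (r + i)"
proof
  show "z * x = x * z" for x by (rule central)
  show "S (r + i) * S (r + i) = z * S (r + i) + 1" if "1 \<le> i" "i < s" for i
    using S_quadratic that by (simp add: valid_S_iff)
  show "S (r + i) * S (r + (i + 1)) * S (r + i) = S (r + (i + 1)) * S (r + i) * S (r + (i + 1))"
    if "1 \<le> i" "i + 1 < s" for i
    using S_braid[of "r + i"] that by (simp add: valid_S_iff)
  show "commute (S (r + i)) (S (r + j))" if "1 \<le> i" "j < s" "i + 1 < j" for i j
    using S_far_commute that by (simp add: valid_S_iff)
  show "commute (L (r + 1)) (S (r + j))" if "2 \<le> j" "j < s" for j
    using L_Suc_r_commute_S_right that by simp
  show "commute (L (r + 1)) (L (r + 2))" if "2 \<le> s"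
    using L_Suc_r_commute_L_Suc_Suc_r that by (simp add: numeral_2_eq_2)
  show "L (r + Suc k) = S (r + k) * L (r + k) * S (r + k) + S (r + k)" if "1 \<le> k" "k < s" for k
    using L_Suc_right that by simp
qed

lemma L_Suc_r_commute_L_left: "1 \<le> k \<Longrightarrow> k \<le> r \<Longrightarrow> commute (L (Suc r)) (L k)"
  by (rule left.commute_L_if_commute_generators) (auto simp: L_1 intro: commute_sym[OF T_commute_L_Suc_r])

lemma S_right_commute_L_left: "r < j \<Longrightarrow> j < r + s \<Longrightarrow> 1 \<le> k \<Longrightarrow> k \<le> r \<Longrightarrow> commute (S j) (L k)"
  by (rule left.commute_L_if_commute_generators) (auto simp: L_1 intro: commute_sym[OF T_commute_S_right])

lemma L_left_commute_L_right:
  assumes k: "1 \<le> k" "k \<le> r" and l: "r < l" "l \<le> r + s"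
  shows "commute (L k) (L l)"
proof -
  have "commute (L k) (L (r + (l - r)))"
  proof (rule right.commute_L_if_commute_generators)
    show "commute (L k) (L (r + 1))" using commute_sym[OF L_Suc_r_commute_L_left[OF k]] by simp
    show "commute (L k) (S (r + j))" if "1 \<le> j" "j < l - r" for j
      using that k l by (intro commute_sym[OF S_right_commute_L_left]) auto
  qed (use l in auto)
  then show ?thesis using l by simp
qed

lemma L_commute:
  assumes i: "1 \<le> i" "i \<le> r + s" and j: "1 \<le> j" "j \<le> r + s"
  shows "commute (L i) (L j)"
proof -
  consider "i \<le> r" "j \<le> r" | "i \<le> r" "r < j" | "r < i" "j \<le> r" | "r < i" "r < j"
    by linarith
  then show ?thesis
  proof cases
    case 1
    then show ?thesis using left.L_commute i j by simp
  next
    case 2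
    then show ?thesis using L_left_commute_L_right i j by simp
  next
    case 3
    then show ?thesis using L_left_commute_L_right[of j i] i j by (simp add: commute_def)
  next
    case 4
    then show ?thesis using right.L_commute[of "i - r" "j - r"] i j by simp
  qed
qed

context
  fixes c :: "(nat \<Rightarrow> nat) \<Rightarrow> 'r"
  assumes c: "in_Srs r s c"
begin

lemma finite_support: "finite {m. c m \<noteq> 0}"
  using c unfolding in_Srs_def is_poly_def by blast

lemma swap_invariant:
  assumes "p \<in> {1..<r} \<union> {r + 1..<r + s}"
  shows "c (m \<circ> transpose p (p + 1)) = c m"
proof -
  have "transpose p (p + 1) permutes {1..r} \<or> transpose p (p + 1) permutes {r + 1..r + s}"
    using assms by (auto intro!: permutes_swap_id)
  then show ?thesis using c unfolding in_Srs_def by blast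
qed

lemma T_commute_poly_eval:
  assumes i: "1 \<le> i" "i < r"
  shows "commute (T i) (poly_eval (r + s) \<iota> c L)"
proof (rule commute_poly_eval_swap_invariant[where p = i and c = c, OF alg finite_support])
  show "c (m \<circ> transpose i (i + 1)) = c m" for m
    using i by (intro swap_invariant) auto
  show "commute (T i) (L k)" if "1 \<le> k" "k \<le> r + s" "k \<noteq> i" "k \<noteq> i + 1" for k
  proof (cases "k \<le> r")
    case True
    then show ?thesis using left.T_commute_L[of i k] that i by simp
  next
    case False
    have "commute (T i) (L (r + (k - r)))"
    proof (rule right.commute_L_if_commute_generators)
      show "commute (T i) (L (r + 1))" using T_commute_L_Suc_r i by simp
      show "commute (T i) (S (r + j))" if "1 \<le> j" "j < k - r" for j
        using T_commute_S_right[OF i] that \<open>k \<le> r + s\<close> by simp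
    qed (use False that in auto)
    then show ?thesis using False by simp
  qed
  show "commute (L i) (L (i + 1))" using left.L_commute[of i "i + 1"] i by simp
  show "commute (T i) (L i + L (i + 1))" using left.T_commute_L_add[OF i] by simp
  show "commute (T i) (L i * L (i + 1))" using left.T_commute_L_mult[OF i] by simp
qed (use i in auto)

lemma S_right_commute_poly_eval:
  assumes t: "1 \<le> t" "t < s"
  shows "commute (S (r + t)) (poly_eval (r + s) \<iota> c L)"
proof (rule commute_poly_eval_swap_invariant[where p = "r + t" and c = c, OF alg finite_support])
  show "c (m \<circ> transpose (r + t) (r + t + 1)) = c m" for m
    using t by (intro swap_invariant) auto
  show "commute (S (r + t)) (L k)" if "1 \<le> k" "k \<le> r + s" "k \<noteq> r + t" "k \<noteq> r + t + 1" for k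
  proof (cases "k \<le> r")
    case True
    then show ?thesis using S_right_commute_L_left[of "r + t" k] that t by simp
  next
    case False
    then show ?thesis using right.T_commute_L[of t "k - r"] that t by simp
  qed
  show "commute (L (r + t)) (L (r + t + 1))" using right.L_commute[of t "t + 1"] t by simp
  show "commute (S (r + t)) (L (r + t) + L (r + t + 1))" using right.T_commute_L_add[OF t] by simp
  show "commute (S (r + t)) (L (r + t) * L (r + t + 1))" using right.T_commute_L_mult[OF t] by simp
qed (use t in auto)

lemma E_commute_poly_eval: "commute E (poly_eval (r + s) \<iota> c L)"
proof (rule commute_poly_eval_alternating[where p = r and c = c, OF alg finite_support])
  show "\<forall>m k. m r = 0 \<and> m (r + 1) = 0 \<and> 0 < k \<longrightarrow>
      (\<Sum>a\<le>k. (-1) ^ (k - a) * c (m(r := a, r + 1 := k - a))) = 0"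
    using c unfolding in_Srs_def by blast
  show "commute E (L k)" if "1 \<le> k" "k \<le> r + s" "k \<noteq> r" "k \<noteq> r + 1" for k
    using E_commute_L_below E_commute_L_above that by (cases "k < r") auto
  show "commute (L r) (L (r + 1))" using L_commute r_pos s_pos by simp
qed (use r_pos s_pos E_mult_L_r_add L_r_add_mult_E in auto)

lemma poly_eval_central:
  assumes "x \<in> gen_alg r s \<iota> S E"
  shows "x * poly_eval (r + s) \<iota> c L = poly_eval (r + s) \<iota> c L * x"
  using assms
proof (induction rule: gen_alg.induct)
  case (scal a)
  then show ?case by (rule central)
next
  case (genS i)
  have "commute (poly_eval (r + s) \<iota> c L) (S i)"
  proof (cases "i < r")
    case True
    then have "commute (poly_eval (r + s) \<iota> c L) (T i + z)"
      using genS commute_sym[OF T_commute_poly_eval[of i]] by (intro commute_add) (auto simp: valid_S_iff)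
    then show ?thesis by (simp add: T_eq)
  next
    case False
    then show ?thesis
      using genS commute_sym[OF S_right_commute_poly_eval[of "i - r"]] by (auto simp: valid_S_iff)
  qed
  then show ?case unfolding commute_def by simp
next
  case genE
  then show ?case using E_commute_poly_eval unfolding commute_def .
next
  case (add x y)
  then show ?case by (simp add: algebra_simps)
next
  case (mult x y)
  then show ?case using commute_mult[of "poly_eval (r + s) \<iota> c L" x y] unfolding commute_def by simp
qed

end

end

theorem mainTheorem19:
  fixes r s :: nat and q qi rho rhoi delta :: "'r::idom"
    and \<iota> :: "'r \<Rightarrow> 'a::ring_1" and S :: "nat \<Rightarrow> 'a" and E :: 'a
  assumes "1 \<le> r" and "1 \<le> s"
    and "q * qi = 1" and "rho * rhoi = 1" and "q \<noteq> qi"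
    and "delta * (q - qi) = rho - rhoi"
    and "is_alg_map \<iota>"
    and "WB_relations r s \<iota> q qi rho delta S E"
  shows "(\<forall>i\<in>{1..r+s}. \<forall>j\<in>{1..r+s}.
            JM r \<iota> q qi rho delta S E i * JM r \<iota> q qi rho delta S E j
          = JM r \<iota> q qi rho delta S E j * JM r \<iota> q qi rho delta S E i)
    \<and> (\<forall>c. in_Srs r s c \<longrightarrow>
         (\<forall>z\<in>gen_alg r s \<iota> S E.
            z * poly_eval (r+s) \<iota> c (JM r \<iota> q qi rho delta S E)
          = poly_eval (r+s) \<iota> c (JM r \<iota> q qi rho delta S E) * z))"
proof -
  \<comment> \<open>\<open>q \<noteq> qi\<close> only serves to determine \<open>delta\<close>; the argument does not need it.\<close>
  interpret quantized_walled_brauer r s q qi rho rhoi delta \<iota> S E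
    using assms by unfold_locales
  show ?thesis
  proof (intro conjI ballI allI impI)
    show "L i * L j = L j * L i" if "i \<in> {1..r + s}" "j \<in> {1..r + s}" for i j
      using L_commute[of i j] that unfolding commute_def by simp
    show "x * poly_eval (r + s) \<iota> c L = poly_eval (r + s) \<iota> c L * x"
      if "in_Srs r s c" "x \<in> gen_alg r s \<iota> S E" for c x
      using poly_eval_central that .
  qed
qed

end
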